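(* Let $\boldsymbol{\sigma}=(\sigma_n\colon\mathcal{A}_{n+1}^+\to\mathcal{A}_n^+)_{n\in\mathbb{N}}$ and $\boldsymbol{\tau}=(\tau_n\colon\mathcal{B}_{n+1}^+\to\mathcal{B}_n^+)_{n\in\mathbb{N}}$ be everywhere growing and proper directive sequences and let $\boldsymbol{\phi}=(\phi_n)_{n\in\mathbb{N}}\colon\boldsymbol{\sigma}\to\boldsymbol{\tau}$ be a letter-onto factor. Then $X_{\boldsymbol{\tau}}=\bigcup_{k\in\mathbb{Z}}T^k\phi_0(X^{(1)}_{\boldsymbol{\sigma}})$ and $X^{(n)}_{\boldsymbol{\tau}}=\bigcup_{k\in\mathbb{Z}}T^k\phi_n(X^{(n)}_{\boldsymbol{\sigma}})$ for every $n\ge1$.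
   Context: An alphabet is a finite set; $\mathcal{A}^+$ is the set of nonempty finite words. A morphism $\sigma\colon\mathcal{A}^+\to\mathcal{B}^+$ is a semigroup homomorphism, extended to $\mathcal{A}^{\mathbb{Z}}\to\mathcal{B}^{\mathbb{Z}}$ by concatenation, $\sigma(x)=\cdots\sigma(x_{-1}).\sigma(x_0)\sigma(x_1)\cdots$ with $\sigma(x_0)$ starting at coordinate $0$; $T$ is the shift. $\sigma$ is proper if there are letters $u,v$ such that every $\sigma(a)$ starts with $u$ and ends with $v$; letter-onto if every $b\in\mathcal{B}$ occurs in some $\sigma(a)$. For a directive sequence $\boldsymbol{\sigma}=(\sigma_n\colon\mathcal{A}_{n+1}^+\to\mathcal{A}_n^+)$, $\sigma_{[n,N)}=\sigma_n\circ\cdots\circ\sigma_{N-1}$, its $n$th level is $X^{(n)}_{\boldsymbol{\sigma}}=\{x\in\mathcal{A}_n^{\mathbb{Z}}:\forall\ell,\ x_{[-\ell,\ell]}$ occurs in $\sigma_{[n,N)}(a)$ for some $N>n,a\in\mathcal{A}_N\}$, and $X_{\boldsymbol{\sigma}}=X^{(0)}_{\boldsymbol{\sigma}}$. It is everywhere growing if $\min_{a\in\mathcal{A}_N}|\sigma_{[0,N)}(a)|\to\infty$; proper if each $\sigma_n$ is proper. A factor $\boldsymbol{\phi}\colon\boldsymbol{\sigma}\to\boldsymbol{\tau}$ is a sequence of morphisms $\phi_0\colon\mathcal{A}_1^+\to\mathcal{B}_0^+$, $\phi_n\colon\mathcal{A}_n^+\to\mathcal{B}_n^+$ ($n\ge1$)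 with $\phi_0=\tau_0\phi_1$ and $\phi_n\sigma_n=\tau_n\phi_{n+1}$ for $n\ge1$; it is letter-onto if each $\phi_n$ is. *)

theory Defs
  imports Main "HOL-Library.Sublist"
begin

text \<open>Letters of the alphabets A_n live in a common type; an alphabet is a finite
nonempty set. A morphism is given by its letter images (nonempty lists).
Bi-infinite sequences are functions int => letter.\<close>

definition wmorph :: "('a \<Rightarrow> 'b list) \<Rightarrow> 'a list \<Rightarrow> 'b list" where
  "wmorph f w = concat (map f w)"

text \<open>dcomp s n k = s_[n, n+k) = s_n o ... o s_(n+k-1) acting on words.\<close>
fun dcomp :: "(nat \<Rightarrow> 'a \<Rightarrow> 'a list) \<Rightarrow> nat \<Rightarrow> nat \<Rightarrow> 'a list \<Rightarrow> 'a list" where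
  "dcomp s n 0 = id"
| "dcomp s n (Suc k) = wmorph (s n) \<circ> dcomp s (Suc n) k"

definition is_morphism :: "'a set \<Rightarrow> 'b set \<Rightarrow> ('a \<Rightarrow> 'b list) \<Rightarrow> bool" where
  "is_morphism A B f \<longleftrightarrow> (\<forall>a\<in>A. f a \<noteq> [] \<and> set (f a) \<subseteq> B)"

definition proper_morph :: "'a set \<Rightarrow> 'b set \<Rightarrow> ('a \<Rightarrow> 'b list) \<Rightarrow> bool" where
  "proper_morph A B f \<longleftrightarrow> (\<exists>u\<in>B. \<exists>v\<in>B. \<forall>a\<in>A. hd (f a) = u \<and> last (f a) = v)"

definition letter_onto :: "'a set \<Rightarrow> 'b set \<Rightarrow> ('a \<Rightarrow> 'b list) \<Rightarrow> bool" where
  "letter_onto A B f \<longleftrightarrow> (\<forall>b\<in>B. \<exists>a\<in>A. b \<in> set (f a))"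

definition directive_seq :: "(nat \<Rightarrow> 'a set) \<Rightarrow> (nat \<Rightarrow> 'a \<Rightarrow> 'a list) \<Rightarrow> bool" where
  "directive_seq A s \<longleftrightarrow> (\<forall>n. finite (A n) \<and> A n \<noteq> {} \<and> is_morphism (A (Suc n)) (A n) (s n))"

definition everywhere_growing :: "(nat \<Rightarrow> 'a set) \<Rightarrow> (nat \<Rightarrow> 'a \<Rightarrow> 'a list) \<Rightarrow> bool" where
  "everywhere_growing A s \<longleftrightarrow>
     (\<forall>M. \<exists>N0. \<forall>N\<ge>N0. \<forall>a\<in>A N. M \<le> length (dcomp s 0 N [a]))"

definition proper_seq :: "(nat \<Rightarrow> 'a set) \<Rightarrow> (nat \<Rightarrow> 'a \<Rightarrow> 'a list) \<Rightarrow> bool" where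
  "proper_seq A s \<longleftrightarrow> (\<forall>n. proper_morph (A (Suc n)) (A n) (s n))"

definition window :: "(int \<Rightarrow> 'a) \<Rightarrow> nat \<Rightarrow> 'a list" where
  "window x l = map (\<lambda>i. x (int i - int l)) [0..<2*l+1]"

definition level :: "(nat \<Rightarrow> 'a set) \<Rightarrow> (nat \<Rightarrow> 'a \<Rightarrow> 'a list) \<Rightarrow> nat \<Rightarrow> (int \<Rightarrow> 'a) set" where
  "level A s n = {x. (\<forall>i. x i \<in> A n) \<and>
     (\<forall>l. \<exists>N>n. \<exists>a\<in>A N. sublist (window x l) (dcomp s n (N - n) [a]))}"

text \<open>Starting coordinate of the image of x_i under f extended to bi-infinite sequences
(f(x_0) starts at coordinate 0).\<close>
definition start_pos :: "('a \<Rightarrow> 'b list) \<Rightarrow> (int \<Rightarrow> 'a) \<Rightarrow> int \<Rightarrow> int" where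
  "start_pos f x i = (if 0 \<le> i then (\<Sum>j\<in>{0..<i}. int (length (f (x j))))
                      else - (\<Sum>j\<in>{i..<0}. int (length (f (x j)))))"

text \<open>Extension of a morphism (with nonempty images) to bi-infinite sequences:
 f(x) = ... f(x_-1).f(x_0) f(x_1) ...\<close>
definition ext_morph :: "('a \<Rightarrow> 'b list) \<Rightarrow> (int \<Rightarrow> 'a) \<Rightarrow> (int \<Rightarrow> 'b)" where
  "ext_morph f x = (\<lambda>p. THE c. \<exists>i. \<exists>k. k < length (f (x i)) \<and>
       p = start_pos f x i + int k \<and> c = f (x i) ! k)"

definition shiftk :: "int \<Rightarrow> (int \<Rightarrow> 'a) \<Rightarrow> (int \<Rightarrow> 'a)" where
  "shiftk k x = (\<lambda>i. x (i + k))"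

definition is_factor :: "(nat \<Rightarrow> 'a set) \<Rightarrow> (nat \<Rightarrow> 'a \<Rightarrow> 'a list) \<Rightarrow>
    (nat \<Rightarrow> 'b set) \<Rightarrow> (nat \<Rightarrow> 'b \<Rightarrow> 'b list) \<Rightarrow> (nat \<Rightarrow> 'a \<Rightarrow> 'b list) \<Rightarrow> bool" where
  "is_factor A s B t phi \<longleftrightarrow>
     is_morphism (A 1) (B 0) (phi 0) \<and>
     (\<forall>n\<ge>1. is_morphism (A n) (B n) (phi n)) \<and>
     (\<forall>a\<in>A 1. phi 0 a = wmorph (t 0) (phi 1 a)) \<and>
     (\<forall>n\<ge>1. \<forall>a\<in>A (Suc n). wmorph (phi n) (s n a) = wmorph (t n) (phi (Suc n) a))"

definition letter_onto_factor :: "(nat \<Rightarrow> 'a set) \<Rightarrow> (nat \<Rightarrow> 'b set) \<Rightarrow> (nat \<Rightarrow> 'a \<Rightarrow> 'b list) \<Rightarrow> bool" where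
  "letter_onto_factor A B phi \<longleftrightarrow>
     letter_onto (A 1) (B 0) (phi 0) \<and> (\<forall>n\<ge>1. letter_onto (A n) (B n) (phi n))"

end

theory Submission
  imports Defs "HOL-Library.Diagonal_Subsequence" "HOL-Library.FuncSet" "HOL-Library.Infinite_Set"
begin

text \<open>
  At level \<open>n\<close> put \<open>(\<psi>, m) = (\<phi>\<^sub>0, 1)\<close> if \<open>n = 0\<close> and \<open>(\<psi>, m) = (\<phi>\<^sub>n, n)\<close> otherwise;
  the factor identities give \<open>\<tau>\<^bsub>[n,N)\<^esub> \<circ> \<phi>\<^sub>N = \<psi> \<circ> \<sigma>\<^bsub>[m,N)\<^esub>\<close> for \<open>N \<ge> m\<close>.

  For \<open>\<subseteq>\<close>: a window of \<open>y\<close> occurs in some \<open>\<tau>\<^bsub>[n,N)\<^esub>(b)\<close>, and \<open>b\<close> occurs in some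
  \<open>\<phi>\<^sub>N(a)\<close> because \<open>\<phi>\<^sub>N\<close> is letter-onto, so the window occurs in \<open>\<psi>(\<sigma>\<^bsub>[m,N)\<^esub>(a))\<close>.
  Centring \<open>\<sigma>\<^bsub>[m,N)\<^esub>(a)\<close> at the letter whose image covers the middle of the window
  gives a sequence \<open>z\<close> and an offset \<open>k\<close> below the maximal image length with
  \<open>y = T\<^sup>k \<psi>(z)\<close> on the window, the central windows of \<open>z\<close> being in the language of \<open>\<sigma>\<close>.
  A cluster point of these pairs \<open>(z, k)\<close> as the window grows is a point \<open>x\<close> of level \<open>m\<close>
  with \<open>y = T\<^sup>k \<psi>(x)\<close>.

  For \<open>\<supseteq>\<close>: a window of \<open>\<psi>(x)\<close> lies in \<open>\<psi>(w)\<close> for a window \<open>w\<close> of \<open>x\<close>, and \<open>w\<close> occurs in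
  \<open>\<sigma>\<^bsub>[m,N+1)\<^esub>(a)\<close> with \<open>N\<close> so large that every \<open>\<tau>\<^bsub>[n,N)\<^esub>(c)\<close> is longer than \<open>\<psi>(w)\<close>.
  Then \<open>\<psi>(w)\<close> occurs in \<open>\<tau>\<^bsub>[n,N)\<^esub>(\<omega>)\<close> for \<open>\<omega> = \<tau>\<^sub>N(\<phi>\<^bsub>N+1\<^esub>(a))\<close>, inside the images of
  at most two consecutive letters of \<open>\<omega>\<close>. Such a pair either lies in a single \<open>\<tau>\<^sub>N(b)\<close>
  or is the pair (last letter, first letter) common to all images of \<open>\<tau>\<^sub>N\<close> by properness,
  which occurs at a deeper level by growth.
\<close>

section \<open>Words and morphisms\<close>

lemma wmorph_Nil [simp]: "wmorph f [] = []"
  by (simp add: wmorph_def)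

lemma wmorph_Cons [simp]: "wmorph f (a # w) = f a @ wmorph f w"
  by (simp add: wmorph_def)

lemma wmorph_append [simp]: "wmorph f (u @ w) = wmorph f u @ wmorph f w"
  by (simp add: wmorph_def)

lemma wmorph_wmorph: "wmorph g (wmorph f w) = wmorph (\<lambda>c. wmorph g (f c)) w"
  by (induction w) auto

lemma wmorph_cong: "(\<And>c. c \<in> set w \<Longrightarrow> f c = g c) \<Longrightarrow> wmorph f w = wmorph g w"
  by (induction w) auto

lemma set_wmorph: "set (wmorph f w) = (\<Union>c\<in>set w. set (f c))"
  by (induction w) auto

lemma sublist_wmorph: "sublist u w \<Longrightarrow> sublist (wmorph f u) (wmorph f w)"
  by (auto simp: sublist_def) blast

lemma length_wmorph_le:
  "(\<And>c. c \<in> set w \<Longrightarrow> length (f c) \<le> K) \<Longrightarrow> length (wmorph f w) \<le> K * length w"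
  by (induction w) (auto simp: add_mono)

lemma sublist_take_drop: "sublist (take n (drop k w)) w"
  by (metis sublist_drop sublist_order.order_trans sublist_take)

lemma sublist_singletonI: "b \<in> set w \<Longrightarrow> sublist [b] w"
  by (metis append_Cons append_Nil split_list sublist_appendI)

lemma wmorph_nth_split:
  "q < length (wmorph f v) \<Longrightarrow>
    \<exists>v1 c v2 k. v = v1 @ c # v2 \<and> q = length (wmorph f v1) + k \<and> k < length (f c)"
proof (induction v arbitrary: q)
  case (Cons a v)
  show ?case
  proof (cases "q < length (f a)")
    case True
    then show ?thesis by (intro exI[of _ "[]"] exI[of _ a] exI[of _ v] exI[of _ q]) simp
  next
    case False
    then have "q - length (f a) < length (wmorph f v)" using Cons.prems by simp
    then obtain v1 c v2 k where "v = v1 @ c # v2" "q - length (f a) = length (wmorph f v1) + k"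
        "k < length (f c)"
      using Cons.IH by blast
    then show ?thesis
      using False by (intro exI[of _ "a # v1"] exI[of _ c] exI[of _ v2] exI[of _ k]) auto
  qed
qed simp

lemma sublist_wmorph_two_letters:
  assumes "\<forall>c\<in>set \<omega>. length p \<le> length (g c)" and "sublist p (wmorph g \<omega>)"
  shows "\<exists>\<omega>'. sublist \<omega>' \<omega> \<and> length \<omega>' \<le> 2 \<and> sublist p (wmorph g \<omega>')"
  using assms
proof (induction \<omega>)
  case Nil
  then show ?case by (intro exI[of _ "[]"]) simp
next
  case (Cons c \<omega>)
  note long = Cons.prems(1)
  have in_c: "\<exists>\<omega>'. sublist \<omega>' (c # \<omega>) \<and> length \<omega>' \<le> 2 \<and> sublist p (wmorph g \<omega>')"
    if "sublist p (g c)"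
    using that by (intro exI[of _ "[c]"]) (simp add: sublist_Cons_right)
  have "sublist p (g c @ wmorph g \<omega>)" using Cons.prems(2) by simp
  then consider "sublist p (g c)" | "sublist p (wmorph g \<omega>)"
    | p1 p2 where "p = p1 @ p2" "suffix p1 (g c)" "prefix p2 (wmorph g \<omega>)"
    unfolding sublist_append by blast
  then show ?case
  proof cases
    case 1
    then show ?thesis by (rule in_c)
  next
    case 2
    then obtain \<omega>' where "sublist \<omega>' \<omega>" "length \<omega>' \<le> 2" "sublist p (wmorph g \<omega>')"
      using Cons.IH long by auto
    then show ?thesis by (meson sublist_Cons_right)
  next
    case (3 p1 p2)
    show ?thesis
    proof (cases \<omega>)
      case Nil
      then show ?thesis using 3 in_c by simp
    next
      case (Cons d \<omega>2)
      have "length p2 \<le> length (g d)" using long 3(1) Cons by simp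
      moreover have "prefix p2 (g d @ wmorph g \<omega>2)" using 3(3) Cons by simp
      ultimately have "prefix p2 (g d)" by (auto simp: prefix_append)
      then obtain r where "g d = p2 @ r" by (auto simp: prefix_def)
      moreover obtain q where "g c = q @ p1" using 3(2) by (auto simp: suffix_def)
      ultimately have "wmorph g [c, d] = q @ p @ r" using 3(1) by simp
      moreover have "sublist [c, d] (c # \<omega>)" using Cons by (simp add: sublist_Cons_right)
      ultimately show ?thesis by (intro exI[of _ "[c, d]"]) simp
    qed
  qed
qed

lemma sublist_pair_wmorph:
  assumes "sublist [c, d] (wmorph g \<beta>)" and "\<forall>b\<in>set \<beta>. g b \<noteq> []"
  shows "(\<exists>b\<in>set \<beta>. sublist [c, d] (g b)) \<or> (\<exists>b1\<in>set \<beta>. \<exists>b2\<in>set \<beta>. c = last (g b1) \<and> d = hd (g b2))"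
  using assms
proof (induction \<beta>)
  case Nil
  then show ?case by simp
next
  case (Cons b \<beta>)
  have IH: "(\<exists>b\<in>set \<beta>. sublist [c, d] (g b)) \<or>
      (\<exists>b1\<in>set \<beta>. \<exists>b2\<in>set \<beta>. c = last (g b1) \<and> d = hd (g b2))"
    if "sublist [c, d] (wmorph g \<beta>)"
    using Cons.IH[OF that] Cons.prems(2) by simp
  have "sublist [c, d] (g b @ wmorph g \<beta>)" using Cons.prems(1) by simp
  then consider "sublist [c, d] (g b)" | "sublist [c, d] (wmorph g \<beta>)"
    | "suffix [c] (g b)" "prefix [d] (wmorph g \<beta>)"
    | "prefix [c, d] (wmorph g \<beta>)" | "suffix [c, d] (g b)"
    unfolding sublist_append by (auto simp: Cons_eq_append_conv)
  then show ?case
  proof cases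
    case 3
    obtain b2 \<beta>2 where \<beta>: "\<beta> = b2 # \<beta>2" using 3(2) by (cases \<beta>) auto
    have "g b2 \<noteq> []" using Cons.prems(2) \<beta> by simp
    then have "d = hd (g b2)" using 3(2) \<beta> by (cases "g b2") (auto simp: prefix_def)
    moreover have "c = last (g b)" using 3(1) by (auto simp: suffix_def)
    ultimately show ?thesis using \<beta> by auto
  qed (use IH in auto)
qed

section \<open>Iterated substitutions and languages\<close>

lemma is_morphism_nonempty: "is_morphism A B f \<Longrightarrow> a \<in> A \<Longrightarrow> f a \<noteq> []"
  by (simp add: is_morphism_def)

lemma set_wmorph_subset: "is_morphism A B f \<Longrightarrow> set w \<subseteq> A \<Longrightarrow> set (wmorph f w) \<subseteq> B"
  by (auto simp: is_morphism_def set_wmorph)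

lemma directive_seq_finite: "directive_seq A s \<Longrightarrow> finite (A n)"
  by (simp add: directive_seq_def)

lemma directive_seq_nonempty: "directive_seq A s \<Longrightarrow> A n \<noteq> {}"
  by (simp add: directive_seq_def)

lemma directive_seq_morphism: "directive_seq A s \<Longrightarrow> is_morphism (A (Suc n)) (A n) (s n)"
  by (simp add: directive_seq_def)

lemma dcomp_Nil [simp]: "dcomp s n k [] = []"
  by (induction k arbitrary: n) auto

lemma dcomp_append: "dcomp s n k (u @ w) = dcomp s n k u @ dcomp s n k w"
  by (induction k arbitrary: n) auto

lemma dcomp_letterwise: "dcomp s n k w = wmorph (\<lambda>c. dcomp s n k [c]) w"
proof (induction w)
  case (Cons a w)
  then show ?case using dcomp_append[of s n k "[a]" w] by simp
qed simp

lemma dcomp_add: "dcomp s n (k + j) w = dcomp s n k (dcomp s (n + k) j w)"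
  by (induction k arbitrary: n w) auto

lemma dcomp_Suc_right: "dcomp s n (Suc k) w = dcomp s n k (wmorph (s (n + k)) w)"
  using dcomp_add[of s n k 1 w] by simp

lemma sublist_dcomp: "sublist u w \<Longrightarrow> sublist (dcomp s n k u) (dcomp s n k w)"
  by (auto simp: sublist_def dcomp_append) blast

lemma set_dcomp_subset:
  assumes "directive_seq A s" and "set w \<subseteq> A (n + k)"
  shows "set (dcomp s n k w) \<subseteq> A n"
  using assms(2)
proof (induction k arbitrary: n w)
  case (Suc k)
  then have "set (dcomp s (Suc n) k w) \<subseteq> A (Suc n)" by simp
  then show ?case
    using set_wmorph_subset[OF directive_seq_morphism[OF assms(1)]] by simp
qed simp

definition in_language :: "(nat \<Rightarrow> 'a set) \<Rightarrow> (nat \<Rightarrow> 'a \<Rightarrow> 'a list) \<Rightarrow> nat \<Rightarrow> 'a list \<Rightarrow> bool" where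
  "in_language A s n w \<longleftrightarrow> (\<exists>N>n. \<exists>a\<in>A N. sublist w (dcomp s n (N - n) [a]))"

lemma level_iff: "x \<in> level A s n \<longleftrightarrow> (\<forall>i. x i \<in> A n) \<and> (\<forall>l. in_language A s n (window x l))"
  by (simp add: level_def in_language_def)

lemma in_language_sublist: "in_language A s n w \<Longrightarrow> sublist u w \<Longrightarrow> in_language A s n u"
  unfolding in_language_def by (meson sublist_order.order_trans)

lemma in_language_image:
  "a \<in> A (Suc n) \<Longrightarrow> sublist w (s n a) \<Longrightarrow> in_language A s n w"
  unfolding in_language_def by (intro exI[of _ "Suc n"] conjI bexI[of _ a]) simp_all

lemma in_language_dcomp:
  assumes "in_language A s N w" and "n \<le> N"
  shows "in_language A s n (dcomp s n (N - n) w)"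
proof -
  obtain M a where M: "M > N" "a \<in> A M" and "sublist w (dcomp s N (M - N) [a])"
    using assms(1) unfolding in_language_def by blast
  then have "sublist (dcomp s n (N - n) w) (dcomp s n (N - n) (dcomp s N (M - N) [a]))"
    using sublist_dcomp by blast
  also have "dcomp s n (N - n) (dcomp s N (M - N) [a]) = dcomp s n (M - n) [a]"
    using dcomp_add[of s n "N - n" "M - N" "[a]"] assms(2) M(1) by simp
  finally show ?thesis unfolding in_language_def using M assms(2) by (intro exI[of _ M]) auto
qed

lemma everywhere_growing_from_level:
  assumes dir: "directive_seq B t" and growing: "everywhere_growing B t"
  obtains N0 where "N0 \<ge> j" "\<And>N e. N0 \<le> N \<Longrightarrow> e \<in> B N \<Longrightarrow> M \<le> length (dcomp t j (N - j) [e])"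
proof -
  define C where "C = Max ((\<lambda>c. length (dcomp t 0 j [c])) ` B j)"
  have C: "length (dcomp t 0 j [c]) \<le> Suc C" if "c \<in> B j" for c
    using that directive_seq_finite[OF dir] unfolding C_def by (simp add: le_SucI)
  obtain N1 where N1: "\<And>N a. N1 \<le> N \<Longrightarrow> a \<in> B N \<Longrightarrow> M * Suc C \<le> length (dcomp t 0 N [a])"
    using growing unfolding everywhere_growing_def by blast
  have "M \<le> length (dcomp t j (N - j) [e])" if N: "max N1 j \<le> N" and e: "e \<in> B N" for N e
  proof -
    define w where "w = dcomp t j (N - j) [e]"
    have "set w \<subseteq> B j"
      unfolding w_def using set_dcomp_subset[OF dir, of "[e]" j "N - j"] N e by simp
    have "dcomp t 0 N [e] = dcomp t 0 j w"
      unfolding w_def using dcomp_add[of t 0 j "N - j" "[e]"] N by simp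
    also have "\<dots> = wmorph (\<lambda>c. dcomp t 0 j [c]) w" by (rule dcomp_letterwise)
    finally have "length (dcomp t 0 N [e]) \<le> Suc C * length w"
      using length_wmorph_le[of w "\<lambda>c. dcomp t 0 j [c]" "Suc C"] C \<open>set w \<subseteq> B j\<close> by auto
    moreover have "M * Suc C \<le> length (dcomp t 0 N [e])" using N1 N e by simp
    ultimately have "M * Suc C \<le> length w * Suc C" by (simp add: mult.commute)
    then show ?thesis unfolding w_def by (metis mult_le_cancel2 zero_less_Suc)
  qed
  then show ?thesis using that[of "max N1 j"] by simp
qed

text \<open>Growth yields two consecutive letters inside one image at level \<open>N + 1\<close>;
  their images under \<open>t N\<close> meet in \<open>[v, u]\<close>.\<close>

lemma proper_boundary_in_language:
  assumes dir: "directive_seq B t" and growing: "everywhere_growing B t"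
    and uv: "\<And>b. b \<in> B (Suc N) \<Longrightarrow> hd (t N b) = u \<and> last (t N b) = v"
  shows "in_language B t N [v, u]"
proof -
  obtain N1 where N1: "N1 \<ge> Suc N"
      "\<And>M e. N1 \<le> M \<Longrightarrow> e \<in> B M \<Longrightarrow> 2 \<le> length (dcomp t (Suc N) (M - Suc N) [e])"
    by (fact everywhere_growing_from_level[OF dir growing, where j = "Suc N" and M = 2])
  obtain e where e: "e \<in> B N1" using directive_seq_nonempty[OF dir] by blast
  define \<rho> where "\<rho> = dcomp t (Suc N) (N1 - Suc N) [e]"
  have \<rho>B: "set \<rho> \<subseteq> B (Suc N)"
    unfolding \<rho>_def using set_dcomp_subset[OF dir, of "[e]" "Suc N" "N1 - Suc N"] N1 e by simp
  have "2 \<le> length \<rho>" unfolding \<rho>_def using N1 e by blast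
  then obtain r1 r2 rest where \<rho>: "\<rho> = r1 # r2 # rest"
    by (cases \<rho>; cases "tl \<rho>") auto
  have r12: "r1 \<in> B (Suc N)" "r2 \<in> B (Suc N)" using \<rho>B \<rho> by auto
  then have "t N r1 \<noteq> []" "t N r2 \<noteq> []" "last (t N r1) = v" "hd (t N r2) = u"
    using uv by (simp_all add: is_morphism_nonempty[OF directive_seq_morphism[OF dir]])
  then have "t N r1 = butlast (t N r1) @ [v]" "t N r2 = u # tl (t N r2)"
    by (metis append_butlast_last_id, metis list.collapse)
  then obtain p1 p2 where "t N r1 = p1 @ [v]" "t N r2 = u # p2" by blast
  moreover have "dcomp t N (N1 - N) [e] = t N r1 @ t N r2 @ wmorph (t N) rest"
    using dcomp_add[of t N 1 "N1 - Suc N" "[e]"] N1 \<rho> unfolding \<rho>_def by (simp add: Suc_diff_Suc)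
  ultimately have "dcomp t N (N1 - N) [e] = p1 @ [v, u] @ (p2 @ wmorph (t N) rest)"
    by simp
  then have "sublist [v, u] (dcomp t N (N1 - N) [e])" by (simp only: sublist_appendI)
  then show ?thesis unfolding in_language_def using N1 e by (intro exI[of _ N1]) auto
qed

lemma short_factor_in_language:
  assumes dir: "directive_seq B t" and growing: "everywhere_growing B t"
    and proper: "proper_seq B t"
    and \<beta>: "set \<beta> \<subseteq> B (Suc N)" and w: "sublist w (wmorph (t N) \<beta>)" and len: "length w \<le> 2"
  shows "in_language B t N w"
proof -
  have ne: "\<forall>b\<in>set \<beta>. t N b \<noteq> []"
    using \<beta> is_morphism_nonempty[OF directive_seq_morphism[OF dir]] by blast
  consider "w = []" | c where "w = [c]" | c d where "w = [c, d]"
    using len by (cases w rule: remdups_adj.cases) auto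
  then show ?thesis
  proof cases
    case 1
    obtain b where "b \<in> B (Suc N)" using directive_seq_nonempty[OF dir] by blast
    then show ?thesis using 1 in_language_image[of _ B N w t] by simp
  next
    case (2 c)
    have "c \<in> set (wmorph (t N) \<beta>)" using w 2 set_mono_sublist by fastforce
    then have "\<exists>b\<in>set \<beta>. c \<in> set (t N b)" by (simp add: set_wmorph)
    then obtain b where "b \<in> set \<beta>" "c \<in> set (t N b)" by blast
    then show ?thesis unfolding 2 by (meson \<beta> in_language_image sublist_singletonI subsetD)
  next
    case (3 c d)
    obtain u v where uv: "\<And>b. b \<in> B (Suc N) \<Longrightarrow> hd (t N b) = u \<and> last (t N b) = v"
      using proper unfolding proper_seq_def proper_morph_def by blast
    from sublist_pair_wmorph[OF w[unfolded 3] ne] show ?thesis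
    proof
      assume "\<exists>b\<in>set \<beta>. sublist [c, d] (t N b)"
      then obtain b where "b \<in> set \<beta>" "sublist [c, d] (t N b)" by blast
      then show ?thesis unfolding 3 by (meson \<beta> in_language_image subsetD)
    next
      assume "\<exists>b1\<in>set \<beta>. \<exists>b2\<in>set \<beta>. c = last (t N b1) \<and> d = hd (t N b2)"
      then have "c = v" "d = u" using uv \<beta> by auto
      then show ?thesis using 3 proper_boundary_in_language[OF dir growing uv] by simp
    qed
  qed
qed

section \<open>Windows and slices of bi-infinite sequences\<close>

definition slice :: "(int \<Rightarrow> 'a) \<Rightarrow> int \<Rightarrow> nat \<Rightarrow> 'a list" where
  "slice x a n = map (\<lambda>j. x (a + int j)) [0..<n]"

lemma length_window [simp]: "length (window y l) = 2 * l + 1"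
  by (simp add: window_def)

lemma window_nth: "i < 2 * l + 1 \<Longrightarrow> window y l ! i = y (int i - int l)"
  unfolding window_def by (simp del: upt_Suc)

lemma window_cong: "(\<And>j. \<bar>j\<bar> \<le> int r \<Longrightarrow> x j = x' j) \<Longrightarrow> window x r = window x' r"
  unfolding window_def by (rule map_cong) auto

lemma window_eq_slice: "window x l = slice x (- int l) (2 * l + 1)"
  unfolding slice_def window_def by (rule map_cong) auto

lemma slice_sublist_window:
  assumes "- int L \<le> a" and "a + int n \<le> int L + 1"
  shows "sublist (slice x a n) (window x L)"
proof -
  have "slice x a n = take n (drop (nat (a + int L)) (window x L))"
    by (rule nth_equalityI) (use assms in \<open>auto simp: slice_def window_nth\<close>)
  then show ?thesis by (simp add: sublist_take_drop)
qed

lemma window_sublist_mono: "l \<le> l' \<Longrightarrow> sublist (window x l) (window x l')"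
  unfolding window_eq_slice[of x l] by (rule slice_sublist_window) auto

lemma level_window_occurs_deep:
  assumes dir: "directive_seq A s" and x: "x \<in> level A s n"
  obtains N a where "N > N0" "a \<in> A N" "sublist (window x l) (dcomp s n (N - n) [a])"
proof -
  define S where "S = (\<Union>N\<le>N0. (\<lambda>a. length (dcomp s n (N - n) [a])) ` A N)"
  have "finite S" unfolding S_def by (simp add: directive_seq_finite[OF dir])
  define L where "L = l + Max S"
  obtain N a where N: "N > n" "a \<in> A N" and occ: "sublist (window x L) (dcomp s n (N - n) [a])"
    using x unfolding level_def by blast
  have "N > N0"
  proof (rule ccontr)
    assume "\<not> N0 < N"
    then have "length (dcomp s n (N - n) [a]) \<in> S" unfolding S_def using N(2) by auto
    then have "length (dcomp s n (N - n) [a]) \<le> Max S" using \<open>finite S\<close> by simp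
    then show False using sublist_length_le[OF occ] unfolding L_def by simp
  qed
  moreover have "sublist (window x l) (dcomp s n (N - n) [a])"
    using window_sublist_mono[of l L x] occ unfolding L_def
    by (meson le_add1 sublist_order.order_trans)
  ultimately show ?thesis using N that by blast
qed

lemma level_limit:
  assumes letters: "\<And>l j. Z l j \<in> A n"
    and windows: "\<And>l r. K * (r + 1) \<le> l \<Longrightarrow> in_language A s n (window (Z l) r)"
    and agree: "\<And>r L. \<exists>l\<ge>L. \<forall>j. \<bar>j\<bar> \<le> int r \<longrightarrow> Z l j = x j"
  shows "x \<in> level A s n"
  unfolding level_iff
proof (intro conjI allI)
  fix j
  obtain l where "\<forall>i. \<bar>i\<bar> \<le> int (nat \<bar>j\<bar>) \<longrightarrow> Z l i = x i" using agree by blast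
  then show "x j \<in> A n" using letters[of l j] by simp
next
  fix r
  obtain l where l: "K * (r + 1) \<le> l" "\<forall>j. \<bar>j\<bar> \<le> int r \<longrightarrow> Z l j = x j" using agree by blast
  then have "window (Z l) r = window x r" by (intro window_cong) simp
  then show "in_language A s n (window x r)" using windows[OF l(1)] by simp
qed

section \<open>Extension of a morphism to bi-infinite sequences\<close>

lemma start_pos_0 [simp]: "start_pos f x 0 = 0"
  by (simp add: start_pos_def)

lemma start_pos_Suc: "start_pos f x (i + 1) = start_pos f x i + int (length (f (x i)))"
proof (cases "0 \<le> i")
  case True
  then have "{0..<i + 1} = insert i {0..<i}" by auto
  then show ?thesis using True by (simp add: start_pos_def)
next
  case False
  then have ivl: "{i..<0} = insert i {i + 1..<0}" by auto
  show ?thesis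
  proof (cases "i + 1 = 0")
    case True
    then show ?thesis using False ivl by (simp add: start_pos_def)
  next
    case False
    then show ?thesis using \<open>\<not> 0 \<le> i\<close> ivl by (simp add: start_pos_def)
  qed
qed

lemma start_pos_Suc_offset:
  "start_pos f x (a + int (Suc n)) = start_pos f x (a + int n) + int (length (f (x (a + int n))))"
proof -
  have "a + int (Suc n) = (a + int n) + 1" by simp
  then show ?thesis by (simp only: start_pos_Suc)
qed

lemma start_pos_mono:
  assumes ne: "\<And>i. f (x i) \<noteq> []" and "i \<le> j"
  shows "start_pos f x i + (j - i) \<le> start_pos f x j"
proof -
  have "start_pos f x i + int d \<le> start_pos f x (i + int d)" for d
  proof (induction d)
    case (Suc d)
    have "0 < length (f (x (i + int d)))" using ne by simp
    then show ?case using Suc start_pos_Suc_offset[of f x i d] by linarith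
  qed simp
  from this[of "nat (j - i)"] show ?thesis using assms(2) by simp
qed

lemma start_pos_block_unique:
  assumes ne: "\<And>i. f (x i) \<noteq> []"
    and "k < length (f (x i))" "k' < length (f (x i'))"
    and "start_pos f x i + int k = start_pos f x i' + int k'"
  shows "i = i' \<and> k = k'"
proof -
  have "\<not> j < j'" if "k1 < length (f (x j))" "start_pos f x j + int k1 = start_pos f x j' + int k2"
    for j j' k1 k2
  proof
    assume "j < j'"
    then have "start_pos f x (j + 1) \<le> start_pos f x j'"
      using start_pos_mono[of f x, OF ne, of "j + 1" j'] by simp
    then show False using that start_pos_Suc[of f x j] by simp
  qed
  then have "i = i'" using assms by (metis linorder_neqE_linordered_idom)
  then show ?thesis using assms by simp
qed

lemma ext_morph_at:
  assumes ne: "\<And>i. f (x i) \<noteq> []" and k: "k < length (f (x i))"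
  shows "ext_morph f x (start_pos f x i + int k) = f (x i) ! k"
  unfolding ext_morph_def
proof (rule the_equality)
  fix c
  assume "\<exists>i' k'. k' < length (f (x i')) \<and> start_pos f x i + int k = start_pos f x i' + int k'
    \<and> c = f (x i') ! k'"
  then show "c = f (x i) ! k" using start_pos_block_unique[of f x, OF ne k] by metis
qed (use k in blast)

lemma start_pos_block_exists:
  "start_pos f x a \<le> p \<Longrightarrow> p < start_pos f x (a + int n) \<Longrightarrow>
    \<exists>i. start_pos f x i \<le> p \<and> p < start_pos f x (i + 1)"
proof (induction n)
  case (Suc n)
  show ?case
  proof (cases "p < start_pos f x (a + int n)")
    case True
    then show ?thesis using Suc by blast
  next
    case False
    have "a + int (Suc n) = (a + int n) + 1" by simp
    then have "p < start_pos f x ((a + int n) + 1)" using Suc.prems(2) by metis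
    then show ?thesis using False by (intro exI[of _ "a + int n"]) simp
  qed
qed simp

lemma ext_morph_block:
  assumes ne: "\<And>i. f (x i) \<noteq> []"
  obtains i k where "k < length (f (x i))" "p = start_pos f x i + int k" "\<bar>i\<bar> \<le> \<bar>p\<bar>"
proof -
  define a where "a = - \<bar>p\<bar> - 1"
  have "start_pos f x a \<le> p"
    using start_pos_mono[of f x, OF ne, of a 0] unfolding a_def by simp linarith
  moreover have "p < start_pos f x (a + int (nat (2 * \<bar>p\<bar> + 2)))"
    using start_pos_mono[of f x, OF ne, of 0 "\<bar>p\<bar> + 1"] unfolding a_def by simp
  ultimately obtain i where i: "start_pos f x i \<le> p" "p < start_pos f x (i + 1)"
    using start_pos_block_exists by blast
  have "\<bar>i\<bar> \<le> \<bar>p\<bar>"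
  proof (cases "0 \<le> i")
    case True
    then show ?thesis using start_pos_mono[of f x, OF ne True] i by simp
  next
    case False
    then show ?thesis using start_pos_mono[of f x, OF ne, of "i + 1" 0] i by simp
  qed
  then show ?thesis
    using that[of "nat (p - start_pos f x i)" i] i start_pos_Suc[of f x i] by simp
qed

lemma ext_morph_letter:
  assumes "\<And>i. f (x i) \<noteq> []"
  obtains i where "ext_morph f x p \<in> set (f (x i))"
  using ext_morph_block[of f x, OF assms, of p] ext_morph_at[of f x, OF assms] by (metis nth_mem)

lemma start_pos_cong: "(\<And>j. \<bar>j\<bar> \<le> \<bar>i\<bar> \<Longrightarrow> x j = x' j) \<Longrightarrow> start_pos f x i = start_pos f x' i"
  unfolding start_pos_def by (auto intro!: sum.cong)

lemma ext_morph_local: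
  assumes ne: "\<And>i. f (x i) \<noteq> []" and ne': "\<And>i. f (x' i) \<noteq> []"
    and agree: "\<And>j. \<bar>j\<bar> \<le> r \<Longrightarrow> x j = x' j" and p: "\<bar>p\<bar> \<le> r"
  shows "ext_morph f x p = ext_morph f x' p"
proof -
  obtain i k where ik: "k < length (f (x i))" "p = start_pos f x i + int k" "\<bar>i\<bar> \<le> \<bar>p\<bar>"
    using ext_morph_block[of f x, OF ne, of p] by blast
  then have "start_pos f x i = start_pos f x' i" "x i = x' i"
    using agree p by (auto intro!: start_pos_cong)
  then show ?thesis
    using ik ext_morph_at[of f x, OF ne ik(1)] ext_morph_at[of f x', OF ne', of k i] by simp
qed

lemma shift_ext_morph_limit:
  assumes ne: "\<And>l j. f (Z l j) \<noteq> []" and ne_x: "\<And>j. f (x j) \<noteq> []"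
    and approx: "\<And>l p. \<bar>p\<bar> \<le> int l \<Longrightarrow> y p = ext_morph f (Z l) (p + int (kf l))"
    and agree: "\<And>r L. \<exists>l\<ge>L. kf l = k \<and> (\<forall>j. \<bar>j\<bar> \<le> int r \<longrightarrow> Z l j = x j)"
  shows "y = shiftk (int k) (ext_morph f x)"
proof
  fix p
  obtain l where l: "l \<ge> nat \<bar>p\<bar>" "kf l = k" "\<forall>j. \<bar>j\<bar> \<le> int (nat \<bar>p\<bar> + k) \<longrightarrow> Z l j = x j"
    using agree by blast
  have "y p = ext_morph f (Z l) (p + int k)" using approx[of p l] l(1,2) by simp
  also have "\<dots> = ext_morph f x (p + int k)"
  proof (rule ext_morph_local[where r = "int (nat \<bar>p\<bar> + k)"])
    show "\<bar>p + int k\<bar> \<le> int (nat \<bar>p\<bar> + k)" by arith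
  qed (use ne ne_x l(3) in auto)
  finally show "y p = shiftk (int k) (ext_morph f x) p" by (simp add: shiftk_def)
qed

lemma start_pos_slice:
  "start_pos f x (a + int n) = start_pos f x a + int (length (wmorph f (slice x a n)))"
proof (induction n)
  case (Suc n)
  have "slice x a (Suc n) = slice x a n @ [x (a + int n)]" by (simp add: slice_def)
  then show ?case using Suc start_pos_Suc_offset[of f x a n] by simp
qed (simp add: slice_def)

lemma ext_morph_slice:
  assumes ne: "\<And>i. f (x i) \<noteq> []" and q: "q < length (wmorph f (slice x a n))"
  shows "ext_morph f x (start_pos f x a + int q) = wmorph f (slice x a n) ! q"
  using q
proof (induction n)
  case (Suc n)
  have sl: "slice x a (Suc n) = slice x a n @ [x (a + int n)]" by (simp add: slice_def)
  show ?case
  proof (cases "q < length (wmorph f (slice x a n))")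
    case True
    then show ?thesis using Suc sl by (simp add: nth_append)
  next
    case False
    define k where "k = q - length (wmorph f (slice x a n))"
    have k: "k < length (f (x (a + int n)))" using Suc.prems False sl unfolding k_def by simp
    have "start_pos f x a + int q = start_pos f x (a + int n) + int k"
      using start_pos_slice[of f x a n] False unfolding k_def by simp
    then have "ext_morph f x (start_pos f x a + int q) = f (x (a + int n)) ! k"
      by (simp only: ext_morph_at[of f x, OF ne k])
    then show ?thesis using sl False unfolding k_def by (simp add: nth_append)
  qed
qed (simp add: slice_def)

lemma window_shift_ext_morph:
  assumes ne: "\<And>i. f (x i) \<noteq> []" and start: "k - int l = start_pos f x a + int j"
    and len: "j + (2 * l + 1) \<le> length (wmorph f (slice x a n))"
  shows "window (shiftk k (ext_morph f x)) l = take (2 * l + 1) (drop j (wmorph f (slice x a n)))"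
proof (rule nth_equalityI)
  fix i assume "i < length (window (shiftk k (ext_morph f x)) l)"
  then have i: "i < 2 * l + 1" by simp
  have pos: "int i - int l + k = start_pos f x a + int (j + i)" using start by simp
  have "window (shiftk k (ext_morph f x)) l ! i = ext_morph f x (int i - int l + k)"
    using i by (simp add: window_nth shiftk_def)
  also have "\<dots> = wmorph f (slice x a n) ! (j + i)"
    unfolding pos using len i by (intro ext_morph_slice[of f x, OF ne]) simp
  also have "\<dots> = take (2 * l + 1) (drop j (wmorph f (slice x a n))) ! i" using len i by simp
  finally show "window (shiftk k (ext_morph f x)) l ! i =
      take (2 * l + 1) (drop j (wmorph f (slice x a n))) ! i" .
qed (use len in simp)

lemma window_shift_ext_morph_sublist:
  assumes ne: "\<And>i. f (x i) \<noteq> []"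
  obtains L where "sublist (window (shiftk k (ext_morph f x)) l) (wmorph f (window x L))"
proof -
  obtain i1 k1 where b1: "k1 < length (f (x i1))" "k - int l = start_pos f x i1 + int k1"
    using ext_morph_block[of f x, OF ne, of "k - int l"] by blast
  obtain i2 k2 where b2: "k2 < length (f (x i2))" "k + int l = start_pos f x i2 + int k2"
    using ext_morph_block[of f x, OF ne, of "k + int l"] by blast
  have end2: "k + int l < start_pos f x (i2 + 1)" using b2 start_pos_Suc[of f x i2] by simp
  have "i1 \<le> i2"
  proof (rule ccontr)
    assume "\<not> i1 \<le> i2"
    then show False using start_pos_mono[of f x, OF ne, of "i2 + 1" i1] end2 b1 by simp
  qed
  define w where "w = slice x i1 (nat (i2 + 1 - i1))"
  have "start_pos f x (i2 + 1) = start_pos f x i1 + int (length (wmorph f w))"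
    using start_pos_slice[of f x i1 "nat (i2 + 1 - i1)"] \<open>i1 \<le> i2\<close> unfolding w_def by simp
  then have "k1 + (2 * l + 1) \<le> length (wmorph f w)" using end2 b1 by linarith
  then have "window (shiftk k (ext_morph f x)) l = take (2 * l + 1) (drop k1 (wmorph f w))"
    unfolding w_def using b1(2) by (intro window_shift_ext_morph[of f x, OF ne])
  then have "sublist (window (shiftk k (ext_morph f x)) l) (wmorph f w)"
    by (simp add: sublist_take_drop)
  moreover have "sublist w (window x (nat (max \<bar>i1\<bar> \<bar>i2\<bar>)))"
    unfolding w_def by (rule slice_sublist_window) (use \<open>i1 \<le> i2\<close> in auto)
  ultimately show ?thesis using that sublist_wmorph sublist_order.order_trans by metis
qed

section \<open>Desubstitution\<close>

definition embed_word :: "'a list \<Rightarrow> nat \<Rightarrow> 'a \<Rightarrow> int \<Rightarrow> 'a" where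
  "embed_word v d a0 j =
     (if 0 \<le> j + int d \<and> j + int d < int (length v) then v ! nat (j + int d) else a0)"

lemma slice_embed_word: "n \<le> length v \<Longrightarrow> slice (embed_word v d a0) (- int d) n = take n v"
  by (rule nth_equalityI) (auto simp: slice_def embed_word_def)

lemma window_embed_word:
  assumes "r \<le> d" and "d + r < length v"
  shows "window (embed_word v d a0) r = take (2 * r + 1) (drop (d - r) v)"
proof (rule nth_equalityI)
  fix i assume "i < length (window (embed_word v d a0) r)"
  moreover have "nat (int i - int r + int d) = d - r + i" using assms(1) by linarith
  ultimately show "window (embed_word v d a0) r ! i = take (2 * r + 1) (drop (d - r) v) ! i"
    using assms by (auto simp: window_nth embed_word_def)
qed (use assms in simp)

lemma window_embed_word_sublist:
  assumes bound: "\<forall>c\<in>set v. length (f c) \<le> K" and v: "v = v1 @ c # v2"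
    and "K * r < length (wmorph f v1)" and "K * r < length (wmorph f v2)"
  shows "sublist (window (embed_word v (length v1) a0) r) v"
proof -
  have "length (wmorph f v1) \<le> K * length v1" "length (wmorph f v2) \<le> K * length v2"
    using bound v by (intro length_wmorph_le; auto)+
  then have "K * r < K * length v1" "K * r < K * length v2" using assms(3,4) by linarith+
  then have "r < length v1" "r < length v2" using mult_less_cancel1 by blast+
  then have "window (embed_word v (length v1) a0) r = take (2 * r + 1) (drop (length v1 - r) v)"
    using v by (intro window_embed_word) auto
  then show ?thesis by (simp add: sublist_take_drop)
qed

lemma ext_morph_embed_word:
  assumes ne: "\<And>j. f (embed_word v d a0 j) \<noteq> []"
    and d: "d \<le> length v" and q: "q < length (wmorph f v)"
  shows "ext_morph f (embed_word v d a0) (int q - int (length (wmorph f (take d v)))) =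
    wmorph f v ! q"
proof -
  let ?z = "embed_word v d a0"
  have "start_pos f ?z (- int d) = - int (length (wmorph f (take d v)))"
    using start_pos_slice[of f ?z "- int d" d] slice_embed_word[OF d] by simp
  moreover have "slice ?z (- int d) (length v) = v" by (simp add: slice_embed_word)
  ultimately show ?thesis
    using ext_morph_slice[of f "embed_word v d a0", OF ne, of q "- int d" "length v"] q by simp
qed

lemma desubstitute_window:
  fixes f :: "'a \<Rightarrow> 'b list"
  assumes ne: "\<forall>c\<in>C. f c \<noteq> []" and bound: "\<forall>c\<in>C. length (f c) \<le> K"
    and a0: "a0 \<in> C" and v: "set v \<subseteq> C" and occ: "sublist (window y l) (wmorph f v)"
  obtains z k where "\<And>j. z j \<in> C" "k < K"
    "\<And>p. \<bar>p\<bar> \<le> int l \<Longrightarrow> y p = ext_morph f z (p + int k)"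
    "\<And>r. K * (r + 1) \<le> l \<Longrightarrow> sublist (window z r) v"
proof -
  obtain pre suf where vs: "wmorph f v = pre @ window y l @ suf"
    using occ by (auto simp: sublist_def)
  then obtain v1 c v2 k where v_split: "v = v1 @ c # v2"
    and centre: "length pre + l = length (wmorph f v1) + k"
    and k: "k < length (f c)"
    using wmorph_nth_split[of "length pre + l" f v] by auto
  have "c \<in> C" using v v_split by auto
  then have "k < K" using k bound by fastforce
  define z where "z = embed_word v (length v1) a0"
  have zC: "z j \<in> C" for j using v a0 unfolding z_def embed_word_def by auto
  have take_v: "take (length v1) v = v1" and "length v1 \<le> length v" using v_split by simp_all
  have ne_z: "f (z j) \<noteq> []" for j using ne zC by blast
  have y_eq: "y p = ext_morph f z (p + int k)" if p: "\<bar>p\<bar> \<le> int l" for p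
  proof -
    define i where "i = nat (p + int l)"
    have i: "i < 2 * l + 1" "int i = p + int l" using p unfolding i_def by auto
    then have "y p = wmorph f v ! (length pre + i)"
      using vs window_nth[OF i(1), of y] by (simp add: nth_append)
    also have "\<dots> = ext_morph f z (int (length pre + i) - int (length (wmorph f v1)))"
      using ext_morph_embed_word[of f v "length v1" a0 "length pre + i"] ne_z vs i(1) take_v
        \<open>length v1 \<le> length v\<close>
      unfolding z_def by simp
    also have "int (length pre + i) - int (length (wmorph f v1)) = p + int k"
      using centre i(2) by linarith
    finally show ?thesis .
  qed
  have windows: "sublist (window z r) v" if r: "K * (r + 1) \<le> l" for r
    unfolding z_def
  proof (rule window_embed_word_sublist[OF _ v_split])
    show "\<forall>c\<in>set v. length (f c) \<le> K" using bound v by blast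
    have "length (wmorph f v1) + length (f c) + length (wmorph f v2) =
        length pre + (2 * l + 1) + length suf"
      using arg_cong[OF vs, of length] v_split by simp
    moreover have "length (f c) \<le> K" using bound \<open>c \<in> C\<close> by blast
    moreover have "K * r + K \<le> l" using r by (simp add: algebra_simps)
    ultimately show "K * r < length (wmorph f v1)" "K * r < length (wmorph f v2)"
      using centre \<open>k < K\<close> by linarith+
  qed
  show ?thesis using that zC \<open>k < K\<close> y_eq windows by blast
qed

section \<open>Compactness\<close>

lemma strict_mono_constant_subseq:
  assumes "finite (range g)"
  obtains r :: "nat \<Rightarrow> nat" where "strict_mono r" "\<And>l. g (r l) = g (r 0)"
proof -
  obtain l0 where "infinite {l. g l = g l0}"
    using pigeonhole_infinite[of "UNIV :: nat set" g] assms by auto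
  then obtain r :: "nat \<Rightarrow> nat" where "strict_mono r" "\<And>l. r l \<in> {l. g l = g l0}"
    using infinite_enumerate by blast
  then show ?thesis using that by force
qed

lemma finite_valued_cluster_point:
  fixes Z :: "nat \<Rightarrow> int \<Rightarrow> 'c"
  assumes "finite F" and "\<And>l j. Z l j \<in> F"
  obtains x where "\<And>r L. \<exists>l\<ge>L. \<forall>j. \<bar>j\<bar> \<le> int r \<longrightarrow> Z l j = x j"
proof -
  define P where "P r \<sigma> \<longleftrightarrow> (\<forall>l j. \<bar>j\<bar> \<le> int r \<longrightarrow> Z (\<sigma> l) j = Z (\<sigma> 0) j)"
    for r and \<sigma> :: "nat \<Rightarrow> nat"
  interpret subseqs P
  proof
    fix r and \<sigma> :: "nat \<Rightarrow> nat"
    let ?g = "\<lambda>l. restrict (Z (\<sigma> l)) {- int r..int r}"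
    have "range ?g \<subseteq> PiE {- int r..int r} (\<lambda>_. F)" using assms(2) by auto
    then have fin: "finite (range ?g)"
      using assms(1) by (meson finite_PiE finite_atLeastAtMost_int finite_subset)
    obtain \<rho> :: "nat \<Rightarrow> nat" where \<rho>: "strict_mono \<rho>" and const: "\<And>l. ?g (\<rho> l) = ?g (\<rho> 0)"
      by (fact strict_mono_constant_subseq[OF fin])
    have "Z (\<sigma> (\<rho> l)) j = Z (\<sigma> (\<rho> 0)) j" if "\<bar>j\<bar> \<le> int r" for l j
    proof -
      have "j \<in> {- int r..int r}" using that by auto
      then show ?thesis using fun_cong[OF const[of l], of j] by simp
    qed
    then have "P r (\<sigma> \<circ> \<rho>)" unfolding P_def comp_def by blast
    then show "\<exists>\<rho>. strict_mono \<rho> \<and> P r (\<sigma> \<circ> \<rho>)" using \<rho> by blast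
  qed
  have diag: "P r (diagseq \<circ> (+) (Suc r))" for r
    by (rule diagseq_holds) (simp only: P_def comp_def, metis)
  define x where "x j = Z (diagseq (Suc (nat \<bar>j\<bar>))) j" for j
  have "Z (diagseq (Suc r + L)) j = x j" if "\<bar>j\<bar> \<le> int r" for r L j
  proof -
    define k where "k = nat \<bar>j\<bar>"
    have "\<bar>j\<bar> \<le> int k" unfolding k_def by simp
    then have "Z (diagseq (Suc k + (r - k + L))) j = Z (diagseq (Suc k + 0)) j"
      using diag[of k] unfolding P_def comp_def by blast
    moreover have "Suc k + (r - k + L) = Suc r + L" using that unfolding k_def by linarith
    ultimately show ?thesis unfolding x_def k_def[symmetric] by simp
  qed
  moreover have "L \<le> diagseq (Suc r + L)" for r L
    using seq_suble[OF subseq_diagseq, of "Suc r + L"] by simp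
  ultimately show ?thesis using that by blast
qed

section \<open>Levels of a factor\<close>

locale level_factor =
  fixes A :: "nat \<Rightarrow> 'a set" and s :: "nat \<Rightarrow> 'a \<Rightarrow> 'a list"
    and B :: "nat \<Rightarrow> 'b set" and t :: "nat \<Rightarrow> 'b \<Rightarrow> 'b list"
    and phi :: "nat \<Rightarrow> 'a \<Rightarrow> 'b list" and \<psi> :: "'a \<Rightarrow> 'b list" and m n :: nat
  assumes dir_A: "directive_seq A s" and dir_B: "directive_seq B t"
    and growing_B: "everywhere_growing B t" and proper_B: "proper_seq B t"
    and psi_morph: "is_morphism (A m) (B n) \<psi>"
    and phi_morph: "\<And>N. m \<le> N \<Longrightarrow> is_morphism (A N) (B N) (phi N)"
    and phi_onto: "\<And>N. m \<le> N \<Longrightarrow> letter_onto (A N) (B N) (phi N)"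
    and commutes: "\<And>N a. m \<le> N \<Longrightarrow> a \<in> A N \<Longrightarrow>
      dcomp t n (N - n) (phi N a) = wmorph \<psi> (dcomp s m (N - m) [a])"
    and m_le: "m \<le> Suc n"
begin

lemma psi_nonempty: "\<forall>c\<in>A m. \<psi> c \<noteq> []"
  using psi_morph by (simp add: is_morphism_def)

lemma level_desubstitution:
  assumes y: "y \<in> level B t n" and bound: "\<forall>c\<in>A m. length (\<psi> c) \<le> K"
  obtains Z kf where "\<And>l j. Z l j \<in> A m" "\<And>l. kf l < K"
    "\<And>l p. \<bar>p\<bar> \<le> int l \<Longrightarrow> y p = ext_morph \<psi> (Z l) (p + int (kf l))"
    "\<And>l r. K * (r + 1) \<le> l \<Longrightarrow> in_language A s m (window (Z l) r)"
proof -
  have "\<exists>z k. (\<forall>j. z j \<in> A m) \<and> k < K \<and> (\<forall>p. \<bar>p\<bar> \<le> int l \<longrightarrow> y p = ext_morph \<psi> z (p + int k))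
    \<and> (\<forall>r. K * (r + 1) \<le> l \<longrightarrow> in_language A s m (window z r))" for l
  proof -
    obtain N b where N: "N > Suc n" "b \<in> B N"
      and occ: "sublist (window y l) (dcomp t n (N - n) [b])"
      using level_window_occurs_deep[OF dir_B y] by blast
    then have "m < N" using m_le by simp
    then obtain a where a: "a \<in> A N" "b \<in> set (phi N a)"
      using phi_onto N unfolding letter_onto_def by (meson less_imp_le)
    define v where "v = dcomp s m (N - m) [a]"
    have "sublist (dcomp t n (N - n) [b]) (dcomp t n (N - n) (phi N a))"
      using a(2) by (intro sublist_dcomp sublist_singletonI)
    also have "dcomp t n (N - n) (phi N a) = wmorph \<psi> v"
      unfolding v_def using commutes[OF _ a(1)] \<open>m < N\<close> by simp
    finally have occ_v: "sublist (window y l) (wmorph \<psi> v)"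
      using occ sublist_order.order_trans by blast
    have v_A: "set v \<subseteq> A m" using set_dcomp_subset[OF dir_A, of "[a]" m "N - m"] a \<open>m < N\<close>
      unfolding v_def by simp
    obtain a0 where a0: "a0 \<in> A m" using directive_seq_nonempty[OF dir_A] by blast
    obtain z k where z: "\<And>j. z j \<in> A m" "k < K" "\<And>p. \<bar>p\<bar> \<le> int l \<Longrightarrow> y p = ext_morph \<psi> z (p + int k)"
      and win: "\<And>r. K * (r + 1) \<le> l \<Longrightarrow> sublist (window z r) v"
      by (fact desubstitute_window[OF psi_nonempty bound a0 v_A occ_v])
    have "in_language A s m v" unfolding in_language_def v_def using \<open>m < N\<close> a by auto
    then show ?thesis using z win in_language_sublist by blast
  qed
  then obtain Z kf where "\<forall>l. (\<forall>j. Z l j \<in> A m) \<and> kf l < K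
    \<and> (\<forall>p. \<bar>p\<bar> \<le> int l \<longrightarrow> y p = ext_morph \<psi> (Z l) (p + int (kf l)))
    \<and> (\<forall>r. K * (r + 1) \<le> l \<longrightarrow> in_language A s m (window (Z l) r))"
    by metis
  then show ?thesis using that by blast
qed

lemma level_subset: "level B t n \<subseteq> (\<Union>k. shiftk k ` ext_morph \<psi> ` level A s m)"
proof
  fix y assume y: "y \<in> level B t n"
  define K where "K = Max ((\<lambda>c. length (\<psi> c)) ` A m)"
  have finA: "finite (A m)" by (rule directive_seq_finite[OF dir_A])
  then have bound: "\<forall>c\<in>A m. length (\<psi> c) \<le> K" unfolding K_def by simp
  obtain Z kf where Z: "\<And>l j. Z l j \<in> A m" "\<And>l. kf l < K"
      "\<And>l p. \<bar>p\<bar> \<le> int l \<Longrightarrow> y p = ext_morph \<psi> (Z l) (p + int (kf l))"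
      "\<And>l r. K * (r + 1) \<le> l \<Longrightarrow> in_language A s m (window (Z l) r)"
    by (fact level_desubstitution[OF y bound])
  obtain x' where x': "\<And>r L. \<exists>l\<ge>L. \<forall>j. \<bar>j\<bar> \<le> int r \<longrightarrow> (Z l j, kf l) = x' j"
    by (rule finite_valued_cluster_point[of "A m \<times> {..<K}" "\<lambda>l j. (Z l j, kf l)"])
      (use finA Z in auto)
  define x k where "x = fst \<circ> x'" and "k = snd (x' 0)"
  have agree: "\<exists>l\<ge>L. kf l = k \<and> (\<forall>j. \<bar>j\<bar> \<le> int r \<longrightarrow> Z l j = x j)" for r L
  proof -
    obtain l where l: "l \<ge> L" "\<forall>j. \<bar>j\<bar> \<le> int r \<longrightarrow> (Z l j, kf l) = x' j" using x' by blast
    then have "(Z l 0, kf l) = x' 0" by simp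
    then have "kf l = k" unfolding k_def by (metis snd_conv)
    moreover have "Z l j = x j" if "\<bar>j\<bar> \<le> int r" for j
      using l(2) that unfolding x_def by (metis comp_apply fst_conv)
    ultimately show ?thesis using l(1) by blast
  qed
  have "x \<in> level A s m"
  proof (rule level_limit[where Z = Z and K = K])
    show "Z l j \<in> A m" for l j by (rule Z(1))
    show "in_language A s m (window (Z l) r)" if "K * (r + 1) \<le> l" for l r using that by (rule Z(4))
    show "\<exists>l\<ge>L. \<forall>j. \<bar>j\<bar> \<le> int r \<longrightarrow> Z l j = x j" for r L using agree by blast
  qed
  moreover have "y = shiftk (int k) (ext_morph \<psi> x)"
  proof (rule shift_ext_morph_limit[where Z = Z and kf = kf])
    show "\<psi> (Z l j) \<noteq> []" for l j using Z(1) psi_nonempty by blast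
    show "\<psi> (x j) \<noteq> []" for j using \<open>x \<in> level A s m\<close> psi_nonempty unfolding level_iff by blast
    show "y p = ext_morph \<psi> (Z l) (p + int (kf l))" if "\<bar>p\<bar> \<le> int l" for l p
      using that by (rule Z(3))
  qed (rule agree)
  ultimately show "y \<in> (\<Union>k. shiftk k ` ext_morph \<psi> ` level A s m)" by blast
qed

lemma wmorph_window_in_language:
  assumes x: "x \<in> level A s m"
  shows "in_language B t n (wmorph \<psi> (window x L))"
proof -
  define u where "u = wmorph \<psi> (window x L)"
  obtain N0 where N0: "N0 \<ge> n" "\<And>N e. N0 \<le> N \<Longrightarrow> e \<in> B N \<Longrightarrow> length u \<le> length (dcomp t n (N - n) [e])"
    by (fact everywhere_growing_from_level[OF dir_B growing_B])
  obtain N' a where N': "N' > N0" "a \<in> A N'"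
    and occ: "sublist (window x L) (dcomp s m (N' - m) [a])"
    by (fact level_window_occurs_deep[OF dir_A x])
  define N where "N = N' - 1"
  have N: "N' = Suc N" "N0 \<le> N" "m \<le> N'" using N' N0 m_le unfolding N_def by auto
  define \<omega> where "\<omega> = wmorph (t N) (phi N' a)"
  have \<beta>: "set (phi N' a) \<subseteq> B (Suc N)"
    using phi_morph[OF N(3)] N' N(1) unfolding is_morphism_def by auto
  then have "set \<omega> \<subseteq> B N"
    unfolding \<omega>_def by (rule set_wmorph_subset[OF directive_seq_morphism[OF dir_B]])
  have "sublist u (wmorph \<psi> (dcomp s m (N' - m) [a]))" unfolding u_def
    using occ by (rule sublist_wmorph)
  also have "wmorph \<psi> (dcomp s m (N' - m) [a]) = dcomp t n (N' - n) (phi N' a)"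
    using commutes N' N by simp
  also have "\<dots> = wmorph (\<lambda>c. dcomp t n (N - n) [c]) \<omega>"
    using dcomp_Suc_right[of t n "N - n" "phi N' a"] dcomp_letterwise[of t n "N - n" \<omega>] N N0
    unfolding \<omega>_def by (simp add: Suc_diff_le)
  finally have occ_\<omega>: "sublist u (wmorph (\<lambda>c. dcomp t n (N - n) [c]) \<omega>)" .
  have "\<forall>c\<in>set \<omega>. length u \<le> length (dcomp t n (N - n) [c])" using N0(2) N(2) \<open>set \<omega> \<subseteq> B N\<close> by blast
  then obtain \<omega>' where \<omega>': "sublist \<omega>' \<omega>" "length \<omega>' \<le> 2"
      and "sublist u (wmorph (\<lambda>c. dcomp t n (N - n) [c]) \<omega>')"
    using sublist_wmorph_two_letters[OF _ occ_\<omega>] by blast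
  then have "sublist u (dcomp t n (N - n) \<omega>')" using dcomp_letterwise[of t n "N - n" \<omega>'] by simp
  have "in_language B t N \<omega>'"
    using short_factor_in_language[OF dir_B growing_B proper_B \<beta>] \<omega>' sublist_order.order_trans
    unfolding \<omega>_def by blast
  then have "in_language B t n (dcomp t n (N - n) \<omega>')"
    by (rule in_language_dcomp) (use N N0 in simp)
  then show ?thesis
    using \<open>sublist u (dcomp t n (N - n) \<omega>')\<close> in_language_sublist unfolding u_def by blast
qed

lemma level_supset:
  assumes x: "x \<in> level A s m"
  shows "shiftk k (ext_morph \<psi> x) \<in> level B t n"
  unfolding level_iff
proof (intro conjI allI)
  have xA: "x i \<in> A m" for i using x unfolding level_iff by blast
  then have ne: "\<psi> (x i) \<noteq> []" for i using psi_nonempty by blast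
  show "shiftk k (ext_morph \<psi> x) p \<in> B n" for p
    using ext_morph_letter[of \<psi> x, OF ne, of "p + k"] xA psi_morph
      unfolding is_morphism_def shiftk_def by blast
  fix l
  obtain L where "sublist (window (shiftk k (ext_morph \<psi> x)) l) (wmorph \<psi> (window x L))"
    using window_shift_ext_morph_sublist[of \<psi> x, OF ne] by blast
  then show "in_language B t n (window (shiftk k (ext_morph \<psi> x)) l)"
    using wmorph_window_in_language[OF x] in_language_sublist by blast
qed

theorem level_eq: "level B t n = (\<Union>k. shiftk k ` ext_morph \<psi> ` level A s m)"
  using level_subset level_supset by blast

end

section \<open>Factors of directive sequences\<close>

lemma factor_dcomp:
  assumes dir: "directive_seq A s" and factor: "is_factor A s B t phi"
    and "1 \<le> n" and "a \<in> A (n + d)"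
  shows "dcomp t n d (phi (n + d) a) = wmorph (phi n) (dcomp s n d [a])"
  using assms(3,4)
proof (induction d arbitrary: n)
  case (Suc d)
  define w where "w = dcomp s (Suc n) d [a]"
  have w: "set w \<subseteq> A (Suc n)"
    unfolding w_def using set_dcomp_subset[OF dir, of "[a]" "Suc n" d] Suc.prems by simp
  have "dcomp t n (Suc d) (phi (n + Suc d) a) = wmorph (t n) (wmorph (phi (Suc n)) w)"
    using Suc.IH[of "Suc n"] Suc.prems unfolding w_def by simp
  also have "\<dots> = wmorph (phi n) (wmorph (s n) w)"
    unfolding wmorph_wmorph
      using w factor Suc.prems(1) by (intro wmorph_cong) (auto simp: is_factor_def)
  finally show ?case unfolding w_def by simp
qed simp

lemma factor_dcomp_0:
  assumes dir: "directive_seq A s" and factor: "is_factor A s B t phi" and a: "a \<in> A (Suc d)"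
  shows "dcomp t 0 (Suc d) (phi (Suc d) a) = wmorph (phi 0) (dcomp s 1 d [a])"
proof -
  define w where "w = dcomp s 1 d [a]"
  have w: "set w \<subseteq> A 1" unfolding w_def using set_dcomp_subset[OF dir, of "[a]" 1 d] a by simp
  have "dcomp t 0 (Suc d) (phi (Suc d) a) = wmorph (t 0) (wmorph (phi 1) w)"
    using factor_dcomp[OF dir factor, of 1 a d] a unfolding w_def by simp
  also have "\<dots> = wmorph (phi 0) w"
    unfolding wmorph_wmorph using w factor by (intro wmorph_cong) (auto simp: is_factor_def)
  finally show ?thesis unfolding w_def .
qed

theorem lemma4p3:
  fixes A :: "nat \<Rightarrow> 'a set" and s :: "nat \<Rightarrow> 'a \<Rightarrow> 'a list"
    and B :: "nat \<Rightarrow> 'b set" and t :: "nat \<Rightarrow> 'b \<Rightarrow> 'b list"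
    and phi :: "nat \<Rightarrow> 'a \<Rightarrow> 'b list"
  assumes "directive_seq A s" and "everywhere_growing A s" and "proper_seq A s"
    and "directive_seq B t" and "everywhere_growing B t" and "proper_seq B t"
    and "is_factor A s B t phi" and "letter_onto_factor A B phi"
  shows "level B t 0 = (\<Union>k. shiftk k ` ext_morph (phi 0) ` level A s 1) \<and>
         (\<forall>n\<ge>1. level B t n = (\<Union>k. shiftk k ` ext_morph (phi n) ` level A s n))"
proof -
  have morph: "is_morphism (A 1) (B 0) (phi 0)" "\<And>N. 1 \<le> N \<Longrightarrow> is_morphism (A N) (B N) (phi N)"
    using assms(7) unfolding is_factor_def by auto
  have onto: "\<And>N. 1 \<le> N \<Longrightarrow> letter_onto (A N) (B N) (phi N)"
    using assms(8) unfolding letter_onto_factor_def by auto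
  have commutes_0: "dcomp t 0 (N - 0) (phi N a) = wmorph (phi 0) (dcomp s 1 (N - 1) [a])"
    if N: "1 \<le> N" and a: "a \<in> A N" for N a
  proof -
    obtain d where "N = Suc d" using N by (cases N) auto
    then show ?thesis using factor_dcomp_0[OF assms(1,7), of a d] a by simp
  qed
  have level_0: "level_factor A s B t phi (phi 0) 1 0"
    by unfold_locales (use assms(1,4-6) morph onto commutes_0 in auto)
  have level_n: "level_factor A s B t phi (phi n) n n" if "1 \<le> n" for n
  proof -
    have commutes_n: "dcomp t n (N - n) (phi N a) = wmorph (phi n) (dcomp s n (N - n) [a])"
      if "n \<le> N" "a \<in> A N" for N a
      using factor_dcomp[OF assms(1,7) \<open>1 \<le> n\<close>, of a "N - n"] that by simp
    show ?thesis by unfold_locales (use assms(1,4-6) morph onto commutes_n \<open>1 \<le> n\<close> in auto)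
  qed
  show ?thesis
    using level_factor.level_eq[OF level_0] level_factor.level_eq[OF level_n] by blast
qed

end
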